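(* Let $\mathcal{F}$ be a family of objects such that any subset of $n$ objects from $\mathcal{F}$ admits a unimax coloring with $\gamma_{\mathrm{um}}(n)$ colors, where $\gamma_{\mathrm{um}}$ is non-decreasing. Then one can maintain a conflict-free coloring of a set $S$ of objects from $\mathcal{F}$ under insertions such that the number of used colors is $O(\gamma_{\mathrm{um}}(n)\log^2 n)$ and the number of recolorings per insertion is at most $\lceil\log n\rceil$, where $n$ is the current number of objects in $S$.
   Context: The setting is abstract: either objects are regions in the plane and colorings are considered with respect to points, or objects are points and colorings are considered with respect to a fixed family of ranges. For a point (resp. range) $q$, let $S_q$ be the set of objects of $S$ in relation with $q$ (regions containing $q$, resp. points contained in $q$). A coloring of $S$ is conflict-free if for every $q$ with $S_q\neq\emptyset$ some object of $S_q$ has a color unique within $S_q$; it is unimax if, with colors being integers, the maximum color in $S_q$ is attained by exactly one object of $S_q$ whenever $S_q\ne\emptyset$. The number of recolorings of an insertion is the number of previously present objects whose color changes. *)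

theory Defs
  imports Complex_Main
begin

text \<open>Abstract setting: objects of type 'a, "witnesses" (points or ranges) of type 'q,
  and a relation R q s meaning object s is in relation with q.\<close>

definition rel_set :: "('q \<Rightarrow> 'a \<Rightarrow> bool) \<Rightarrow> 'a set \<Rightarrow> 'q \<Rightarrow> 'a set" where
  "rel_set R S q = {s \<in> S. R q s}"

definition conflict_free :: "('q \<Rightarrow> 'a \<Rightarrow> bool) \<Rightarrow> 'a set \<Rightarrow> ('a \<Rightarrow> 'c) \<Rightarrow> bool" where
  "conflict_free R S c \<longleftrightarrow>
     (\<forall>q. rel_set R S q \<noteq> {} \<longrightarrow>
        (\<exists>s\<in>rel_set R S q. \<forall>t\<in>rel_set R S q. t \<noteq> s \<longrightarrow> c t \<noteq> c s))"

definition unimax :: "('q \<Rightarrow> 'a \<Rightarrow> bool) \<Rightarrow> 'a set \<Rightarrow> ('a \<Rightarrow> int) \<Rightarrow> bool" where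
  "unimax R S c \<longleftrightarrow>
     (\<forall>q. rel_set R S q \<noteq> {} \<longrightarrow>
        (\<exists>!s. s \<in> rel_set R S q \<and> c s = Max (c ` rel_set R S q)))"

definition recolorings :: "'a list \<Rightarrow> ('a \<Rightarrow> 'c) \<Rightarrow> ('a \<Rightarrow> 'c) \<Rightarrow> nat" where
  "recolorings xs c c' = card {y \<in> set xs. c' y \<noteq> c y}"

end

theory Submission
  imports Defs "HOL-Library.Nat_Bijection"
begin

(* Index the objects by insertion time. For every k the positions are cut into dyadic blocks of
   2^k consecutive positions. Once a block is complete it receives a unimax colouring, its objects
   are ranked by decreasing colour, and from then on every insertion activates the next object of
   this ranking. An object gets the colour (k, j, c), where k is the largest level at which it is
   active, j its block at that level and c its unimax colour there.
   For a point q, let k be the largest level of an object of S_q. In its block, the object of S_q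
   with the unique maximal unimax colour is ranked no later, hence is active at level k too, and its
   colour occurs only once in S_q. An insertion activates at most one object at each level k >= 1
   with 2^k <= n + 1, which bounds the recolourings by ceil(log (n + 1)). An object of level k lies
   in one of the last four complete blocks of that level, so only 4 (log n + 1) unimax colourings,
   each with at most gamma(n) colours, contribute. *)

definition precedes :: "(nat \<Rightarrow> 'b::linorder) \<Rightarrow> nat \<Rightarrow> nat \<Rightarrow> bool" where
  "precedes u a b \<longleftrightarrow> u b < u a \<or> (u a = u b \<and> a < b)"

definition rank :: "(nat \<Rightarrow> 'b::linorder) \<Rightarrow> nat set \<Rightarrow> nat \<Rightarrow> nat" where
  "rank u B p = card {a \<in> B. precedes u a p}"

lemma precedes_trans: "precedes u a b \<Longrightarrow> precedes u b c \<Longrightarrow> precedes u a c"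
  unfolding precedes_def by auto

lemma precedes_irrefl: "\<not> precedes u a a"
  unfolding precedes_def by auto

lemma precedes_total: "a \<noteq> b \<Longrightarrow> precedes u a b \<or> precedes u b a"
  unfolding precedes_def by auto

lemma rank_less:
  assumes "finite B" "a \<in> B" "precedes u a b"
  shows "rank u B a < rank u B b"
proof -
  have "{x \<in> B. precedes u x a} \<subset> {x \<in> B. precedes u x b}"
    using assms precedes_trans precedes_irrefl by blast
  then show ?thesis
    unfolding rank_def using assms(1) by (simp add: psubset_card_mono)
qed

lemma rank_eq_imp_eq:
  assumes "finite B" "a \<in> B" "b \<in> B" "rank u B a = rank u B b"
  shows "a = b"
  using rank_less[OF assms(1,2), of u b] rank_less[OF assms(1,3), of u a]
    precedes_total[of a b u] assms(4) by fastforce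

lemma rank_less_card:
  assumes "finite B" "p \<in> B"
  shows "rank u B p < card B"
proof -
  have "{x \<in> B. precedes u x p} \<subset> B"
    using assms precedes_irrefl by blast
  then show ?thesis
    unfolding rank_def using assms(1) by (simp add: psubset_card_mono)
qed

lemma card_rank_eq_le_1:
  assumes "finite B"
  shows "card {p \<in> B. rank u B p = s} \<le> 1"
  using rank_eq_imp_eq[OF assms] assms by (auto simp: card_le_Suc0_iff_eq)

definition unimax_bounded :: "('q \<Rightarrow> 'a \<Rightarrow> bool) \<Rightarrow> 'a set \<Rightarrow> (nat \<Rightarrow> nat) \<Rightarrow> bool" where
  "unimax_bounded R F g \<longleftrightarrow>
     (\<forall>S. S \<subseteq> F \<longrightarrow> finite S \<longrightarrow> (\<exists>c. unimax R S c \<and> card (c ` S) \<le> g (card S)))"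

definition block :: "nat \<Rightarrow> nat \<Rightarrow> nat set" where
  "block k j = {j * 2^k ..< (j + 1) * 2^k}"

definition block_objs :: "'a list \<Rightarrow> nat \<Rightarrow> nat \<Rightarrow> 'a set" where
  "block_objs xs k j = (\<lambda>p. xs ! p) ` block k j"

definition block_col ::
    "('q \<Rightarrow> 'a \<Rightarrow> bool) \<Rightarrow> (nat \<Rightarrow> nat) \<Rightarrow> 'a list \<Rightarrow> nat \<Rightarrow> nat \<Rightarrow> 'a \<Rightarrow> int" where
  "block_col R g xs k j = (SOME c. unimax R (block_objs xs k j) c
      \<and> card (c ` block_objs xs k j) \<le> g (card (block_objs xs k j)))"

(* Zero (by truncated subtraction) until the block is complete, then one more per insertion. *)
definition active_count :: "nat \<Rightarrow> nat \<Rightarrow> nat \<Rightarrow> nat" where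
  "active_count n k j = min (2^k) (Suc n - (j + 1) * 2^k)"

definition active :: "('q \<Rightarrow> 'a \<Rightarrow> bool) \<Rightarrow> (nat \<Rightarrow> nat) \<Rightarrow> 'a list \<Rightarrow> nat \<Rightarrow> nat \<Rightarrow> nat set" where
  "active R g xs k j = {p \<in> block k j.
      rank (\<lambda>i. block_col R g xs k j (xs ! i)) (block k j) p < active_count (length xs) k j}"

definition level :: "('q \<Rightarrow> 'a \<Rightarrow> bool) \<Rightarrow> (nat \<Rightarrow> nat) \<Rightarrow> 'a list \<Rightarrow> nat \<Rightarrow> nat" where
  "level R g xs p = Max {k. p \<in> active R g xs k (p div 2^k)}"

definition color :: "('q \<Rightarrow> 'a \<Rightarrow> bool) \<Rightarrow> (nat \<Rightarrow> nat) \<Rightarrow> 'a list \<Rightarrow> nat \<Rightarrow> nat" where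
  "color R g xs p = (let k = level R g xs p; j = p div 2^k in
     prod_encode (prod_encode (k, j), int_encode (block_col R g xs k j (xs ! p))))"

definition position :: "'a list \<Rightarrow> 'a \<Rightarrow> nat" where
  "position xs y = (SOME p. p < length xs \<and> xs ! p = y)"

definition dyn_col :: "('q \<Rightarrow> 'a \<Rightarrow> bool) \<Rightarrow> (nat \<Rightarrow> nat) \<Rightarrow> 'a list \<Rightarrow> 'a \<Rightarrow> nat" where
  "dyn_col R g xs y = color R g xs (position xs y)"

lemma position_nth: "distinct xs \<Longrightarrow> p < length xs \<Longrightarrow> position xs (xs ! p) = p"
  unfolding position_def by (rule some_equality) (auto simp: nth_eq_iff_index_eq)

lemma finite_block [simp]: "finite (block k j)"
  by (simp add: block_def)

lemma card_block [simp]: "card (block k j) = 2^k"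
  by (simp add: block_def algebra_simps)

lemma div_eq_if_in_block: "p \<in> block k j \<Longrightarrow> p div 2^k = j"
  unfolding block_def by (auto simp: div_nat_eqI algebra_simps)

lemma in_block_div: "p \<in> block k (p div 2^k)"
proof -
  have e: "2^k * (p div 2^k) + p mod 2^k = p" by (rule mult_div_mod_eq)
  have "p mod 2^k < (2::nat)^k" by simp
  then have "p < 2^k + 2^k * (p div 2^k)" using e by linarith
  then show ?thesis unfolding block_def using e by (auto simp: algebra_simps)
qed

lemma active_subset_block: "active R g xs k j \<subseteq> block k j"
  unfolding active_def by auto

lemma active_imp_complete: "p \<in> active R g xs k j \<Longrightarrow> (j + 1) * 2^k \<le> length xs"
  unfolding active_def active_count_def by auto

lemma active_less_length: "p \<in> active R g xs k j \<Longrightarrow> p < length xs"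
  using active_imp_complete[of p R g xs k j] active_subset_block[of R g xs k j]
  unfolding block_def by auto

lemma active_full: "active_count (length xs) k j = 2^k \<Longrightarrow> active R g xs k j = block k j"
  unfolding active_def using rank_less_card[OF finite_block] by auto

lemma active_level_less_length: "p \<in> active R g xs k j \<Longrightarrow> k < length xs"
proof -
  assume "p \<in> active R g xs k j"
  then have "(j + 1) * 2^k \<le> length xs" by (rule active_imp_complete)
  moreover have "2^k \<le> (j + 1) * 2^k" by simp
  moreover have "k < 2^k" by (rule less_exp)
  ultimately show ?thesis by linarith
qed

lemma active_level_0: "p < length xs \<Longrightarrow> p \<in> active R g xs 0 p"
  using rank_less_card[OF finite_block, of p 0 p]
  by (simp add: active_def active_count_def block_def)

lemma finite_active_levels: "finite {k. p \<in> active R g xs k (p div 2^k)}"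
  by (rule finite_subset[of _ "{..<length xs}"]) (auto dest: active_level_less_length)

lemma active_at_level:
  "p < length xs \<Longrightarrow> p \<in> active R g xs (level R g xs p) (p div 2^level R g xs p)"
proof -
  assume "p < length xs"
  then have "0 \<in> {k. p \<in> active R g xs k (p div 2^k)}"
    using active_level_0 by simp
  then show ?thesis
    using Max_in[OF finite_active_levels] unfolding level_def by blast
qed

lemma level_ge: "p \<in> active R g xs k (p div 2^k) \<Longrightarrow> k \<le> level R g xs p"
  unfolding level_def by (rule Max_ge[OF finite_active_levels]) simp

lemma block_objs_subset: "(j + 1) * 2^k \<le> length xs \<Longrightarrow> block_objs xs k j \<subseteq> set xs"
  unfolding block_objs_def block_def by auto

lemma block_col_spec:
  assumes "unimax_bounded R F g"
    and "set xs \<subseteq> F" and "(j + 1) * 2^k \<le> length xs"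
  shows "unimax R (block_objs xs k j) (block_col R g xs k j)
    \<and> card (block_col R g xs k j ` block_objs xs k j) \<le> g (card (block_objs xs k j))"
proof -
  have "block_objs xs k j \<subseteq> F" "finite (block_objs xs k j)"
    using block_objs_subset[OF assms(3)] assms(2) by (auto simp: block_objs_def)
  then have "\<exists>c. unimax R (block_objs xs k j) c
      \<and> card (c ` block_objs xs k j) \<le> g (card (block_objs xs k j))"
    using assms(1) unfolding unimax_bounded_def by blast
  then show ?thesis
    unfolding block_col_def by (rule someI_ex)
qed

lemma color_eqD:
  assumes "color R g xs p = color R g xs p'"
  shows "level R g xs p = level R g xs p'
    \<and> p div 2^level R g xs p = p' div 2^level R g xs p'
    \<and> block_col R g xs (level R g xs p) (p div 2^level R g xs p) (xs ! p)
      = block_col R g xs (level R g xs p') (p' div 2^level R g xs p') (xs ! p')"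
  using assms inj_prod_encode[of UNIV] inj_int_encode[of UNIV]
  unfolding color_def Let_def inj_on_def by blast

lemma active_if_precedes:
  assumes "p \<in> active R g xs k j" "a \<in> block k j"
    and "precedes (\<lambda>i. block_col R g xs k j (xs ! i)) a p"
  shows "a \<in> active R g xs k j"
  using assms rank_less[OF finite_block assms(2,3)] unfolding active_def by auto

lemma unimax_max_active:
  assumes "unimax_bounded R F g"
    and "set xs \<subseteq> F" "distinct xs"
    and p0: "p0 \<in> active R g xs k j" "R q (xs ! p0)"
  obtains ps where "ps \<in> active R g xs k j" "R q (xs ! ps)"
    "\<And>pt. pt \<in> block k j \<Longrightarrow> R q (xs ! pt) \<Longrightarrow>
       block_col R g xs k j (xs ! pt) = block_col R g xs k j (xs ! ps) \<Longrightarrow> pt = ps"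
proof -
  define S where "S = block_objs xs k j"
  define u where "u = block_col R g xs k j"
  have complete: "(j + 1) * 2^k \<le> length xs"
    using p0(1) by (rule active_imp_complete)
  have in_S: "pt \<in> block k j \<Longrightarrow> R q (xs ! pt) \<Longrightarrow> xs ! pt \<in> rel_set R S q" for pt
    unfolding S_def block_objs_def rel_set_def by auto
  have block_less_length: "pt \<in> block k j \<Longrightarrow> pt < length xs" for pt
    using complete unfolding block_def by auto
  have p0_block: "p0 \<in> block k j"
    using p0(1) active_subset_block by blast
  have "unimax R S u"
    using block_col_spec[OF assms(1,2) complete] unfolding S_def u_def by blast
  then obtain s where s: "s \<in> rel_set R S q" "u s = Max (u ` rel_set R S q)"
    and s_unique: "\<And>t. t \<in> rel_set R S q \<Longrightarrow> u t = Max (u ` rel_set R S q) \<Longrightarrow> t = s"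
    using in_S[OF p0_block p0(2)] unfolding unimax_def by blast
  obtain ps where ps: "ps \<in> block k j" "xs ! ps = s" "R q (xs ! ps)"
    using s(1) unfolding rel_set_def S_def block_objs_def by auto
  have u_le: "u (xs ! p0) \<le> u s"
    using s(2) in_S[OF p0_block p0(2)] unfolding S_def block_objs_def rel_set_def by simp
  have same_pos: "pt = ps" if "pt \<in> block k j" "R q (xs ! pt)" "u (xs ! pt) = u s" for pt
  proof -
    have "xs ! pt = xs ! ps"
      using s_unique[OF in_S[OF that(1,2)]] that(3) s(2) ps(2) by simp
    then show ?thesis
      using assms(3) block_less_length that(1) ps(1) nth_eq_iff_index_eq by blast
  qed
  have "ps \<in> active R g xs k j"
  proof (cases "u (xs ! p0) < u s")
    case True
    then have "precedes (\<lambda>i. u (xs ! i)) ps p0"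
      unfolding precedes_def using ps(2) by simp
    then show ?thesis
      using active_if_precedes[OF p0(1) ps(1)] unfolding u_def by blast
  next
    case False
    then have "p0 = ps"
      using same_pos[OF p0_block p0(2)] u_le by simp
    then show ?thesis using p0(1) by simp
  qed
  then show ?thesis
    using that ps(3) same_pos ps(2) unfolding u_def by blast
qed

lemma color_unique_in_range:
  assumes "unimax_bounded R F g"
    and "set xs \<subseteq> F" "distinct xs"
    and "p1 < length xs" "R q (xs ! p1)"
  obtains ps where "ps < length xs" "R q (xs ! ps)"
    "\<And>pt. pt < length xs \<Longrightarrow> R q (xs ! pt) \<Longrightarrow> color R g xs pt = color R g xs ps \<Longrightarrow> pt = ps"
proof -
  define P where "P = {p. p < length xs \<and> R q (xs ! p)}"
  define k where "k = Max (level R g xs ` P)"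
  have "finite P" "P \<noteq> {}"
    using assms(4,5) unfolding P_def by auto
  then obtain p0 where p0: "p0 \<in> P" "level R g xs p0 = k"
    unfolding k_def by (metis (mono_tags, lifting) Max_in finite_imageI image_iff image_is_empty)
  have level_le: "p \<in> P \<Longrightarrow> level R g xs p \<le> k" for p
    unfolding k_def using \<open>finite P\<close> by simp
  define j where "j = p0 div 2^k"
  have "p0 \<in> active R g xs k j"
    using active_at_level p0 unfolding P_def j_def by blast
  then obtain ps where ps: "ps \<in> active R g xs k j" "R q (xs ! ps)"
    and unique: "\<And>pt. pt \<in> block k j \<Longrightarrow> R q (xs ! pt) \<Longrightarrow>
       block_col R g xs k j (xs ! pt) = block_col R g xs k j (xs ! ps) \<Longrightarrow> pt = ps"
    using unimax_max_active[OF assms(1-3)] p0(1) unfolding P_def by blast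
  have ps_len: "ps < length xs"
    using ps(1) by (rule active_less_length)
  have ps_div: "ps div 2^k = j"
    using ps(1) active_subset_block div_eq_if_in_block by blast
  have ps_level: "level R g xs ps = k"
    using level_ge[of ps R g xs k] ps(1) ps_div level_le[of ps] ps_len ps(2)
    unfolding P_def by fastforce
  show ?thesis
  proof (rule that[OF ps_len ps(2)])
    fix pt assume pt: "pt < length xs" "R q (xs ! pt)" "color R g xs pt = color R g xs ps"
    have same: "level R g xs pt = k" "pt div 2^k = j"
      "block_col R g xs k j (xs ! pt) = block_col R g xs k j (xs ! ps)"
      using color_eqD[OF pt(3)] ps_level ps_div by auto
    have "pt \<in> block k j"
      using in_block_div[of pt k] same(2) by simp
    then show "pt = ps"
      using unique pt(2) same(3) by simp
  qed
qed

lemma conflict_free_dyn_col: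
  assumes "unimax_bounded R F g"
    and "set xs \<subseteq> F" "distinct xs"
  shows "conflict_free R (set xs) (dyn_col R g xs)"
  unfolding conflict_free_def
proof (intro allI impI)
  fix q assume "rel_set R (set xs) q \<noteq> {}"
  then obtain p1 where "p1 < length xs" "R q (xs ! p1)"
    unfolding rel_set_def by (auto simp: in_set_conv_nth)
  then obtain ps where ps: "ps < length xs" "R q (xs ! ps)"
    and unique: "\<And>pt. pt < length xs \<Longrightarrow> R q (xs ! pt) \<Longrightarrow>
       color R g xs pt = color R g xs ps \<Longrightarrow> pt = ps"
    using color_unique_in_range[OF assms(1-3)] by blast
  have dyn_col_nth: "p < length xs \<Longrightarrow> dyn_col R g xs (xs ! p) = color R g xs p" for p
    unfolding dyn_col_def using position_nth[OF assms(3)] by simp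
  show "\<exists>s\<in>rel_set R (set xs) q. \<forall>t\<in>rel_set R (set xs) q.
      t \<noteq> s \<longrightarrow> dyn_col R g xs t \<noteq> dyn_col R g xs s"
  proof (intro bexI ballI impI)
    show "xs ! ps \<in> rel_set R (set xs) q"
      using ps unfolding rel_set_def by simp
    fix t assume "t \<in> rel_set R (set xs) q" "t \<noteq> xs ! ps"
    then obtain pt where "pt < length xs" "xs ! pt = t" "R q t" "pt \<noteq> ps"
      unfolding rel_set_def by (auto simp: in_set_conv_nth)
    then show "dyn_col R g xs t \<noteq> dyn_col R g xs (xs ! ps)"
      using unique dyn_col_nth ps(1) by metis
  qed
qed

lemma block_objs_snoc:
  "(j + 1) * 2^k \<le> length xs \<Longrightarrow> block_objs (xs @ [x]) k j = block_objs xs k j"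
  unfolding block_objs_def block_def by (auto simp: nth_append)

lemma block_col_snoc:
  "(j + 1) * 2^k \<le> length xs \<Longrightarrow> block_col R g (xs @ [x]) k j = block_col R g xs k j"
  unfolding block_col_def by (simp only: block_objs_snoc)

lemma rank_block_col_snoc:
  assumes "(j + 1) * 2^k \<le> length xs" "p \<in> block k j"
  shows "rank (\<lambda>i. block_col R g (xs @ [x]) k j ((xs @ [x]) ! i)) (block k j) p
    = rank (\<lambda>i. block_col R g xs k j (xs ! i)) (block k j) p"
proof -
  have "\<forall>i\<in>block k j. block_col R g (xs @ [x]) k j ((xs @ [x]) ! i) = block_col R g xs k j (xs ! i)"
    using assms block_col_snoc[OF assms(1), where R = R and g = g and x = x]
    unfolding block_def by (auto simp: nth_append)
  then have "{a \<in> block k j. precedes (\<lambda>i. block_col R g (xs @ [x]) k j ((xs @ [x]) ! i)) a p}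
      = {a \<in> block k j. precedes (\<lambda>i. block_col R g xs k j (xs ! i)) a p}"
    using assms(2) unfolding precedes_def by auto
  then show ?thesis
    unfolding rank_def by simp
qed

lemma active_snoc_eq:
  assumes "j \<noteq> Suc (length xs) div 2^k - 1"
  shows "active R g (xs @ [x]) k j = active R g xs k j"
proof (cases "(j + 1) * 2^k \<le> length xs")
  case True
  have "active_count (Suc (length xs)) k j = active_count (length xs) k j"
  proof (rule ccontr)
    assume "active_count (Suc (length xs)) k j \<noteq> active_count (length xs) k j"
    then have "Suc (length xs) < (j + 1) * 2^k + 2^k"
      unfolding active_count_def by auto
    then have "Suc (length xs) div 2^k = j + 1"
      using True by (intro div_nat_eqI) (auto simp: algebra_simps)
    then show False using assms by simp
  qed
  then show ?thesis
    unfolding active_def using rank_block_col_snoc[OF True, where R = R and g = g and x = x] by auto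
next
  case False
  then have "(j + 1) * 2^k \<noteq> Suc (length xs)"
    using assms
    by (metis nonzero_mult_div_cancel_right add_diff_cancel_right' power_not_zero zero_neq_numeral)
  then have "active_count (Suc (length xs)) k j = 0" "active_count (length xs) k j = 0"
    using False unfolding active_count_def by auto
  then show ?thesis
    unfolding active_def by simp
qed

lemma active_subset_active_snoc: "active R g xs k j \<subseteq> active R g (xs @ [x]) k j"
proof
  fix p assume p: "p \<in> active R g xs k j"
  have "active_count (length xs) k j \<le> active_count (length (xs @ [x])) k j"
    unfolding active_count_def by auto
  then show "p \<in> active R g (xs @ [x]) k j"
    using p active_subset_block
      rank_block_col_snoc[OF active_imp_complete[OF p], where R = R and g = g and x = x]
    unfolding active_def by auto
qed

(* Suc n div 2^k - 1 is the last complete block of level k after inserting the (n+1)-st object;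
   by active_snoc_eq, no other block of that level changes. *)
definition newly_active :: "('q \<Rightarrow> 'a \<Rightarrow> bool) \<Rightarrow> (nat \<Rightarrow> nat) \<Rightarrow> 'a list \<Rightarrow> 'a \<Rightarrow> nat \<Rightarrow> nat set" where
  "newly_active R g xs x k = active R g (xs @ [x]) k (Suc (length xs) div 2^k - 1)
     - active R g xs k (Suc (length xs) div 2^k - 1)"

lemma active_snoc_iff:
  "p \<in> active R g (xs @ [x]) k j \<longleftrightarrow>
     p \<in> active R g xs k j \<or> (j = Suc (length xs) div 2^k - 1 \<and> p \<in> newly_active R g xs x k)"
  unfolding newly_active_def
  using active_snoc_eq[of j xs k R g x] active_subset_active_snoc[of R g xs k j x] by auto

lemma newly_active_level:
  assumes "p < length xs" "p \<in> newly_active R g xs x k"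
  shows "1 \<le> k \<and> 2^k \<le> Suc (length xs)"
proof -
  have "k \<noteq> 0"
  proof
    assume "k = 0"
    then have "p \<in> block 0 (length xs)"
      using assms(2) active_subset_block unfolding newly_active_def by fastforce
    then show False using assms(1) unfolding block_def by simp
  qed
  moreover have "2^k \<le> Suc (length xs)"
  proof (rule ccontr)
    assume small: "\<not> 2^k \<le> Suc (length xs)"
    then have "p \<in> active R g (xs @ [x]) k 0"
      using assms(2) unfolding newly_active_def by simp
    then show False
      using active_imp_complete small by fastforce
  qed
  ultimately show ?thesis by simp
qed

lemma card_newly_active_le_1: "card (newly_active R g xs x k) \<le> 1"
proof -
  define j where "j = Suc (length xs) div 2^k - 1"
  define r where "r = rank (\<lambda>i. block_col R g (xs @ [x]) k j ((xs @ [x]) ! i)) (block k j)"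
  have "newly_active R g xs x k \<subseteq> {p \<in> block k j. r p = active_count (length xs) k j}"
  proof
    fix p assume "p \<in> newly_active R g xs x k"
    then have p: "p \<in> active R g (xs @ [x]) k j" "p \<notin> active R g xs k j"
      unfolding newly_active_def j_def by auto
    then have p_block: "p \<in> block k j"
      using active_subset_block by blast
    have "r p < active_count (Suc (length xs)) k j"
      using p(1) unfolding active_def r_def by simp
    moreover have "active_count (Suc (length xs)) k j \<le> Suc (active_count (length xs) k j)"
      unfolding active_count_def by auto
    moreover have "active_count (length xs) k j \<le> r p"
    proof (cases "(j + 1) * 2^k \<le> length xs")
      case True
      then show ?thesis
        using p(2) p_block rank_block_col_snoc[OF True p_block, where R = R and g = g and x = x]
        unfolding active_def r_def by auto
    next
      case False
      then show ?thesis unfolding active_count_def by auto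
    qed
    ultimately show "p \<in> {p \<in> block k j. r p = active_count (length xs) k j}"
      using p_block by auto
  qed
  then have "card (newly_active R g xs x k) \<le> card {p \<in> block k j. r p = active_count (length xs) k j}"
    by (rule card_mono[rotated]) simp
  also have "\<dots> \<le> 1"
    unfolding r_def by (rule card_rank_eq_le_1[OF finite_block])
  finally show ?thesis .
qed

lemma color_snoc_eq:
  assumes "p < length xs" "\<And>k. p \<notin> newly_active R g xs x k"
  shows "color R g (xs @ [x]) p = color R g xs p"
proof -
  have "level R g (xs @ [x]) p = level R g xs p"
    unfolding level_def using active_snoc_iff[of p R g xs x] assms(2) by simp
  moreover define k where "k = level R g xs p"
  have "p \<in> active R g xs k (p div 2^k)"
    using active_at_level[OF assms(1)] unfolding k_def by blast
  then have "(p div 2^k + 1) * 2^k \<le> length xs"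
    by (rule active_imp_complete)
  ultimately show ?thesis
    unfolding color_def Let_def k_def[symmetric]
    using block_col_snoc[where R = R and g = g and x = x] assms(1)
    by (simp add: nth_append)
qed

lemma finite_powers_of_two_le: "finite {k. 2^k \<le> (n::nat)}"
  by (rule finite_subset[of _ "{..n}"]) (auto intro: less_imp_le less_le_trans[OF less_exp])

lemma card_powers_of_two_le:
  fixes n :: nat
  assumes "1 \<le> n"
  shows "real (card {k. 2^k \<le> n}) \<le> log 2 n + 1"
proof -
  define m where "m = nat \<lfloor>log 2 n\<rfloor>"
  have "{k. 2^k \<le> n} \<subseteq> {..m}"
    unfolding m_def using le_log2_of_power by (auto simp: le_nat_floor)
  then have "card {k. 2^k \<le> n} \<le> Suc m"
    using card_mono[of "{..m}"] by fastforce
  moreover have "real m \<le> log 2 n"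
    unfolding m_def using assms by simp
  ultimately show ?thesis by linarith
qed

lemma card_levels_le_ceiling_log:
  "real (card {k. 1 \<le> k \<and> 2^k \<le> Suc n}) \<le> \<lceil>log 2 (real (n + 1))\<rceil>"
proof -
  have "{k. 2^k \<le> Suc n} = insert 0 {k. 1 \<le> k \<and> 2^k \<le> Suc n}"
    by auto
  then have "card {k. 2^k \<le> Suc n} = Suc (card {k. 1 \<le> k \<and> 2^k \<le> Suc n})"
    using finite_powers_of_two_le[of "Suc n"] by simp
  then have "real (card {k. 1 \<le> k \<and> 2^k \<le> Suc n}) \<le> log 2 (real (n + 1))"
    using card_powers_of_two_le[of "Suc n"] by simp
  then show ?thesis
    using le_of_int_ceiling order_trans by blast
qed

lemma recolorings_dyn_col_le:
  assumes "distinct xs" "x \<notin> set xs"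
  shows "real (recolorings xs (dyn_col R g xs) (dyn_col R g (xs @ [x])))
    \<le> \<lceil>log 2 (real (length xs + 1))\<rceil>"
proof -
  define K where "K = {k. 1 \<le> k \<and> 2^k \<le> Suc (length xs)}"
  define N where "N = (\<Union>k\<in>K. newly_active R g xs x k)"
  have "K \<subseteq> {..<Suc (length xs)}"
    unfolding K_def using less_le_trans[OF less_exp] by auto
  then have "finite K"
    using finite_subset by blast
  have finite_newly_active: "finite (newly_active R g xs x k)" for k
    unfolding newly_active_def using finite_subset[OF active_subset_block finite_block] by blast
  have "{y \<in> set xs. dyn_col R g (xs @ [x]) y \<noteq> dyn_col R g xs y} \<subseteq> (\<lambda>p. xs ! p) ` N"
  proof
    fix y assume y: "y \<in> {y \<in> set xs. dyn_col R g (xs @ [x]) y \<noteq> dyn_col R g xs y}"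
    then obtain p where p: "p < length xs" "xs ! p = y"
      by (auto simp: in_set_conv_nth)
    have "position (xs @ [x]) y = p" "position xs y = p"
      using position_nth[of "xs @ [x]" p] position_nth[OF assms(1) p(1)] assms p
      by (simp_all add: nth_append)
    then have "color R g (xs @ [x]) p \<noteq> color R g xs p"
      using y unfolding dyn_col_def by simp
    then obtain k where k: "p \<in> newly_active R g xs x k"
      using color_snoc_eq[OF p(1)] by blast
    then have "k \<in> K"
      using newly_active_level[OF p(1)] unfolding K_def by simp
    then have "p \<in> N"
      unfolding N_def using k by blast
    then show "y \<in> (\<lambda>p. xs ! p) ` N" using p by blast
  qed
  moreover have "finite N"
    unfolding N_def using \<open>finite K\<close> finite_newly_active by blast
  ultimately have "recolorings xs (dyn_col R g xs) (dyn_col R g (xs @ [x])) \<le> card ((\<lambda>p. xs ! p) ` N)"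
    unfolding recolorings_def by (intro card_mono) simp_all
  also have "\<dots> \<le> card N"
    using \<open>finite N\<close> by (rule card_image_le)
  also have "\<dots> \<le> (\<Sum>k\<in>K. card (newly_active R g xs x k))"
    unfolding N_def by (rule card_UN_le[OF \<open>finite K\<close>])
  also have "\<dots> \<le> card K"
    using sum_mono[of K _ "\<lambda>_. 1", OF card_newly_active_le_1] by simp
  finally have "real (recolorings xs (dyn_col R g xs) (dyn_col R g (xs @ [x]))) \<le> real (card K)"
    by (rule of_nat_mono)
  then show ?thesis
    using card_levels_le_ceiling_log[of "length xs"] unfolding K_def by linarith
qed

(* A position of level k is not active at level k + 1, so its parent block is not yet fully active:
   fewer than 2^(k+1) insertions have happened since that parent block was completed. *)
lemma level_block_window:
  fixes R :: "'q \<Rightarrow> 'a \<Rightarrow> bool" and g :: "nat \<Rightarrow> nat"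
  assumes "p < length xs"
  defines "k \<equiv> level R g xs p"
  shows "p div 2^k < length xs div 2^k \<and> length xs div 2^k < p div 2^k + 4"
proof -
  define n j where "n = length xs" and "j = p div 2^k"
  have "(j + 1) * 2^k \<le> n"
    using active_imp_complete active_at_level[OF assms(1)] unfolding n_def j_def k_def by blast
  then have "j + 1 \<le> n div 2^k"
    by (simp add: less_eq_div_iff_mult_less_eq)
  then have lower: "j < n div 2^k"
    by simp
  have parent: "p div 2^(k + 1) = j div 2"
    unfolding j_def by (metis div_mult2_eq power_Suc2 Suc_eq_plus1)
  have "p \<notin> active R g xs (k + 1) (p div 2^(k + 1))"
    using level_ge[of p R g xs "k + 1"] unfolding k_def by auto
  then have "active_count n (k + 1) (j div 2) \<noteq> 2^(k + 1)"
    using active_full[of xs "k + 1" "j div 2" R g] in_block_div[of p "k + 1"] parent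
    unfolding n_def by auto
  then have "Suc n < (j div 2 + 2) * 2^(k + 1)"
    unfolding active_count_def by (auto simp: algebra_simps)
  also have "\<dots> \<le> (j + 4) * 2^k"
    by (simp add: algebra_simps)
  finally have "n div 2^k < j + 4"
    by (intro less_mult_imp_div_less) simp
  then show ?thesis
    using lower unfolding n_def j_def by simp
qed

definition block_colors :: "('q \<Rightarrow> 'a \<Rightarrow> bool) \<Rightarrow> (nat \<Rightarrow> nat) \<Rightarrow> 'a list \<Rightarrow> nat \<Rightarrow> nat \<Rightarrow> nat set" where
  "block_colors R g xs k j = (\<lambda>v. prod_encode (prod_encode (k, j), int_encode v))
     ` block_col R g xs k j ` block_objs xs k j"

lemma color_in_block_colors:
  "color R g xs p \<in> block_colors R g xs (level R g xs p) (p div 2^level R g xs p)"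
  unfolding color_def block_colors_def block_objs_def Let_def using in_block_div by blast

lemma card_block_colors_le:
  assumes "unimax_bounded R F g"
    and "mono g" "set xs \<subseteq> F" "(j + 1) * 2^k \<le> length xs"
  shows "card (block_colors R g xs k j) \<le> g (length xs)"
proof -
  have "card (block_colors R g xs k j) \<le> card (block_col R g xs k j ` block_objs xs k j)"
    unfolding block_colors_def by (rule card_image_le) (simp add: block_objs_def)
  also have "\<dots> \<le> g (card (block_objs xs k j))"
    using block_col_spec[OF assms(1,3,4)] by blast
  also have "\<dots> \<le> g (length xs)"
  proof -
    have "card (block_objs xs k j) \<le> card (block k j)"
      unfolding block_objs_def by (rule card_image_le) simp
    also have "\<dots> \<le> length xs"
      using assms(4) by simp
    finally show ?thesis
      using assms(2) by (rule monoD[rotated])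
  qed
  finally show ?thesis .
qed

lemma card_dyn_col_image_le:
  assumes "unimax_bounded R F g"
    and "mono g" "set xs \<subseteq> F" "distinct xs"
  shows "card (dyn_col R g xs ` set xs) \<le> 4 * card {k. 2^k \<le> length xs} * g (length xs)"
proof -
  define n where "n = length xs"
  define K where "K = {k. 2^k \<le> n}"
  define J where "J = (\<lambda>k. {j. j < n div 2^k \<and> n div 2^k < j + 4})"
  have "finite K"
    unfolding K_def by (rule finite_powers_of_two_le)
  have J: "finite (J k)" "card (J k) \<le> 4" for k
  proof -
    have "J k \<subseteq> {n div 2^k - 4 ..< n div 2^k}"
      unfolding J_def by auto
    then show "finite (J k)" "card (J k) \<le> 4"
      using finite_subset card_mono[of "{n div 2^k - 4 ..< n div 2^k}" "J k"] by auto
  qed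
  have complete: "(j + 1) * 2^k \<le> length xs" if "j \<in> J k" for j k
  proof -
    have "j + 1 \<le> n div 2^k"
      using that unfolding J_def by simp
    then show ?thesis
      unfolding n_def by (simp add: less_eq_div_iff_mult_less_eq)
  qed
  have "dyn_col R g xs ` set xs \<subseteq> (\<Union>(k, j)\<in>Sigma K J. block_colors R g xs k j)"
  proof
    fix y assume "y \<in> dyn_col R g xs ` set xs"
    then obtain p where p: "p < n" "y = color R g xs p"
      unfolding n_def dyn_col_def by (auto simp: in_set_conv_nth position_nth[OF assms(4)])
    define k where "k = level R g xs p"
    have "p div 2^k \<in> J k"
      using level_block_window[OF p(1)[unfolded n_def], of R g] unfolding J_def n_def k_def by simp
    moreover have "2^k \<le> (p div 2^k + 1) * 2^k"
      by simp
    then have "k \<in> K"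
      using complete[OF \<open>p div 2^k \<in> J k\<close>] unfolding K_def n_def by simp
    ultimately show "y \<in> (\<Union>(k, j)\<in>Sigma K J. block_colors R g xs k j)"
      using p(2) color_in_block_colors[of R g xs p] unfolding k_def by blast
  qed
  moreover have "finite (Sigma K J)"
    using \<open>finite K\<close> J(1) by blast
  moreover have "finite (block_colors R g xs k j)" for k j
    unfolding block_colors_def block_objs_def by simp
  ultimately have "card (dyn_col R g xs ` set xs) \<le> card (\<Union>(k, j)\<in>Sigma K J. block_colors R g xs k j)"
    by (intro card_mono) auto
  also have "\<dots> \<le> (\<Sum>(k, j)\<in>Sigma K J. card (block_colors R g xs k j))"
    using card_UN_le[OF \<open>finite (Sigma K J)\<close>] by (simp add: case_prod_unfold)
  also have "\<dots> \<le> (\<Sum>(k, j)\<in>Sigma K J. g n)"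
    using card_block_colors_le[OF assms(1-3) complete] unfolding n_def
    by (intro sum_mono) auto
  also have "\<dots> = (\<Sum>k\<in>K. card (J k)) * g n"
    using \<open>finite K\<close> J(1) by (simp add: card_SigmaI)
  also have "\<dots> \<le> 4 * card K * g n"
    using sum_mono[of K "\<lambda>k. card (J k)" "\<lambda>_. 4", OF J(2)] by (simp add: mult.commute)
  finally show ?thesis
    unfolding K_def n_def .
qed

lemma card_dyn_col_image_le_log_square:
  assumes "unimax_bounded R F g"
    and "mono g" "set xs \<subseteq> F" "distinct xs" "2 \<le> length xs"
  shows "real (card (dyn_col R g xs ` set xs))
    \<le> 8 * real (g (length xs)) * (log 2 (length xs))\<^sup>2"
proof -
  define L where "L = log 2 (length xs)"
  have "1 \<le> L"
    unfolding L_def using le_log2_of_power[of 1 "length xs"] assms(5) by simp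
  have "real (card (dyn_col R g xs ` set xs))
      \<le> 4 * real (card {k. 2^k \<le> length xs}) * real (g (length xs))"
    using of_nat_mono[OF card_dyn_col_image_le[OF assms(1-4)]] by simp
  also have "\<dots> \<le> 4 * (L + 1) * real (g (length xs))"
    using card_powers_of_two_le[of "length xs"] assms(5) unfolding L_def
    by (intro mult_right_mono) auto
  also have "\<dots> \<le> 4 * (2 * L\<^sup>2) * real (g (length xs))"
  proof -
    have "L + 1 \<le> 2 * L\<^sup>2"
      using \<open>1 \<le> L\<close> by (smt (verit) power2_eq_square mult_le_cancel_left1)
    then show ?thesis
      by (intro mult_right_mono) auto
  qed
  finally show ?thesis
    unfolding L_def by (simp add: algebra_simps)
qed

theorem mainTheorem7:
  fixes R :: "'q \<Rightarrow> 'a \<Rightarrow> bool"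
    and F :: "'a set"
    and \<gamma> :: "nat \<Rightarrow> nat"
  assumes mono_\<gamma>: "mono \<gamma>"
    and unimax_F: "\<And>S. S \<subseteq> F \<Longrightarrow> finite S \<Longrightarrow>
          \<exists>c. unimax R S c \<and> card (c ` S) \<le> \<gamma> (card S)"
  shows "\<exists>(A :: 'a list \<Rightarrow> 'a \<Rightarrow> nat) (C :: real) (N :: nat).
     \<forall>xs. distinct xs \<and> set xs \<subseteq> F \<longrightarrow>
        conflict_free R (set xs) (A xs)
      \<and> (length xs \<ge> N \<longrightarrow>
           real (card (A xs ` set xs)) \<le> C * real (\<gamma> (length xs)) * (log 2 (length xs))\<^sup>2)
      \<and> (\<forall>x. x \<in> F \<and> x \<notin> set xs \<longrightarrow>
           real (recolorings xs (A xs) (A (xs @ [x]))) \<le> \<lceil>log 2 (real (length xs + 1))\<rceil>)"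
proof (intro exI allI impI conjI)
  have bounded: "unimax_bounded R F \<gamma>"
    unfolding unimax_bounded_def using unimax_F by blast
  fix xs :: "'a list"
  assume xs: "distinct xs \<and> set xs \<subseteq> F"
  show "conflict_free R (set xs) (dyn_col R \<gamma> xs)"
    using conflict_free_dyn_col[OF bounded] xs by blast
  show "real (card (dyn_col R \<gamma> xs ` set xs)) \<le> 8 * real (\<gamma> (length xs)) * (log 2 (length xs))\<^sup>2"
    if "2 \<le> length xs"
    using card_dyn_col_image_le_log_square[OF bounded mono_\<gamma>] xs that by blast
  show "real (recolorings xs (dyn_col R \<gamma> xs) (dyn_col R \<gamma> (xs @ [x])))
      \<le> \<lceil>log 2 (real (length xs + 1))\<rceil>" if "x \<in> F \<and> x \<notin> set xs" for x
    using recolorings_dyn_col_le[where R = R and g = \<gamma>] xs that by blast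
qed

end
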